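(* Let $\mathcal{K}^{\langle\infty\rangle}$ be an unbounded simple nested fractal. There exists a constant $C_8$ such that for every $M\in\mathbb{Z}$, every $x\in\mathcal{K}^{\langle\infty\rangle}$ and every integer $n\ge1$, $$\#\mathcal{L}_{M,n,x}\le C_8\,n^{d_f},$$ where $d_f=\log N/\log L$.
   Context: Setting: $L>1$, $N\ge2$, $\nu_1=0,\dots,\nu_N\in\mathbb{R}^2$, $\Psi_i(x)=x/L+\nu_i$, and $\mathcal{K}^{\langle 0\rangle}=\bigcup_i\Psi_i(\mathcal{K}^{\langle 0\rangle})$ is a planar simple nested fractal (with $V_0^{\langle0\rangle}$ its set of essential fixed points, $k=\#V_0^{\langle0\rangle}\ge3$). $\mathcal{K}^{\langle M\rangle}=L^M\mathcal{K}^{\langle 0\rangle}$, $\mathcal{K}^{\langle\infty\rangle}=\bigcup_{M\ge0}\mathcal{K}^{\langle M\rangle}$. An $M$-complex is $\mathcal{K}^{\langle M\rangle}+\sum_{j=M+1}^{J}L^j\nu_{i_j}$ ($J\ge M+1$, $i_j\in\{1,\dots,N\}$); $\mathcal{T}_M$ is the set of all $M$-complexes. For fixed $x$: $\mathcal{L}_{M,1,x}=\{\Delta_M\in\mathcal{T}_M: x\in\Delta_M\}$ and, for $n\ge1$, $\mathcal{L}_{M,n+1,x}=\{\Delta_M\in\mathcal{T}_M\setminus\bigcup_{i=1}^n\mathcal{L}_{M,i,x}:\ \exists\,\widetilde{\Delta}_M\in\mathcal{L}_{M,n,x},\ \widetilde{\Delta}_M\cap\Delta_M\ne\emptyset\}$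 (the $M$-complexes "at graph distance $n$" from $x$). *)

theory Defs
  imports "HOL-Analysis.Analysis"
begin

type_synonym pt = "real ^ 2"

definition Psi :: "real \<Rightarrow> (nat \<Rightarrow> pt) \<Rightarrow> nat \<Rightarrow> pt \<Rightarrow> pt" where
  "Psi L \<nu> i x = (1 / L) *\<^sub>R x + \<nu> i"

definition Psi_word :: "real \<Rightarrow> (nat \<Rightarrow> pt) \<Rightarrow> nat list \<Rightarrow> pt \<Rightarrow> pt" where
  "Psi_word L \<nu> w = foldr (\<lambda>i f. Psi L \<nu> i \<circ> f) w id"

definition words :: "nat \<Rightarrow> nat \<Rightarrow> nat list set" where
  "words N n = {w. length w = n \<and> set w \<subseteq> {1..N}}"

definition fixed_points :: "real \<Rightarrow> nat \<Rightarrow> (nat \<Rightarrow> pt) \<Rightarrow> pt set" where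
  "fixed_points L N \<nu> = {z. \<exists>i\<in>{1..N}. Psi L \<nu> i z = z}"

definition essential_fixed_points :: "real \<Rightarrow> nat \<Rightarrow> (nat \<Rightarrow> pt) \<Rightarrow> pt set" where
  "essential_fixed_points L N \<nu> =
     {x \<in> fixed_points L N \<nu>. \<exists>y\<in>fixed_points L N \<nu>. y \<noteq> x \<and>
        (\<exists>i\<in>{1..N}. \<exists>j\<in>{1..N}. i \<noteq> j \<and> Psi L \<nu> i x = Psi L \<nu> j y)}"

definition vertices :: "real \<Rightarrow> nat \<Rightarrow> (nat \<Rightarrow> pt) \<Rightarrow> nat \<Rightarrow> pt set" where
  "vertices L N \<nu> n = (\<Union>w\<in>words N n. Psi_word L \<nu> w ` essential_fixed_points L N \<nu>)"

definition reflect_bisector :: "pt \<Rightarrow> pt \<Rightarrow> pt \<Rightarrow> pt" where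
  "reflect_bisector a b z =
     z - (2 * (((z - (1/2) *\<^sub>R (a + b)) \<bullet> (b - a)) / (norm (b - a))^2)) *\<^sub>R (b - a)"

text \<open>Simple (no rotations) planar nested fractal in the sense of Lindstrom:
  K is the (compact, nonempty) attractor of the IFS, the open set condition holds,
  and the connectivity, symmetry and nesting axioms hold.\<close>
definition simple_nested_fractal :: "real \<Rightarrow> nat \<Rightarrow> (nat \<Rightarrow> pt) \<Rightarrow> pt set \<Rightarrow> bool" where
  "simple_nested_fractal L N \<nu> K \<longleftrightarrow>
     L > 1 \<and> N \<ge> 2 \<and>
     compact K \<and> K \<noteq> {} \<and> K = (\<Union>i\<in>{1..N}. Psi L \<nu> i ` K) \<and>
     \<comment> \<open>open set condition\<close>
     (\<exists>U. open U \<and> bounded U \<and> U \<noteq> {} \<and>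
        (\<forall>i\<in>{1..N}. Psi L \<nu> i ` U \<subseteq> U) \<and>
        (\<forall>i\<in>{1..N}. \<forall>j\<in>{1..N}. i \<noteq> j \<longrightarrow> Psi L \<nu> i ` U \<inter> Psi L \<nu> j ` U = {})) \<and>
     \<comment> \<open>connectivity: any two 1-cells are joined by a chain of intersecting 1-cells\<close>
     (\<forall>i\<in>{1..N}. \<forall>j\<in>{1..N}.
        (i, j) \<in> {(a, b). a \<in> {1..N} \<and> b \<in> {1..N} \<and>
                           Psi L \<nu> a ` K \<inter> Psi L \<nu> b ` K \<noteq> {}}\<^sup>*) \<and>
     \<comment> \<open>symmetry\<close>
     (\<forall>a\<in>essential_fixed_points L N \<nu>. \<forall>b\<in>essential_fixed_points L N \<nu>. a \<noteq> b \<longrightarrow>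
        (\<forall>n. reflect_bisector a b ` vertices L N \<nu> n \<subseteq> vertices L N \<nu> n)) \<and>
     \<comment> \<open>nesting\<close>
     (\<forall>n. \<forall>w\<in>words N n. \<forall>w'\<in>words N n. w \<noteq> w' \<longrightarrow>
        Psi_word L \<nu> w ` K \<inter> Psi_word L \<nu> w' ` K =
        Psi_word L \<nu> w ` essential_fixed_points L N \<nu> \<inter>
        Psi_word L \<nu> w' ` essential_fixed_points L N \<nu>)"

definition K_inf :: "real \<Rightarrow> pt set \<Rightarrow> pt set" where
  "K_inf L K = (\<Union>M::nat. (\<lambda>y. (L ^ M) *\<^sub>R y) ` K)"

definition complexes :: "real \<Rightarrow> nat \<Rightarrow> (nat \<Rightarrow> pt) \<Rightarrow> pt set \<Rightarrow> int \<Rightarrow> pt set set" where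
  "complexes L N \<nu> K M =
     {(\<lambda>y. (L powr of_int M) *\<^sub>R y +
            (\<Sum>j\<in>{M+1..J}. (L powr of_int j) *\<^sub>R \<nu> (i j))) ` K
      | J (i :: int \<Rightarrow> nat). J \<ge> M + 1 \<and> (\<forall>j\<in>{M+1..J}. i j \<in> {1..N})}"

text \<open>Layers: LP T x n = (L_n, L_1 \<union> ... \<union> L_n) with L_1 = complexes containing x and
  L_(n+1) = complexes not in L_1..L_n meeting some member of L_n.\<close>
primrec layer_pair :: "'a set set \<Rightarrow> 'a \<Rightarrow> nat \<Rightarrow> 'a set set \<times> 'a set set" where
  "layer_pair T x 0 = ({}, {})"
| "layer_pair T x (Suc n) =
     (if n = 0 then ({\<Delta> \<in> T. x \<in> \<Delta>}, {\<Delta> \<in> T. x \<in> \<Delta>})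
      else (let Ln = fst (layer_pair T x n); U = snd (layer_pair T x n);
                new = {\<Delta> \<in> T - U. \<exists>\<Delta>'\<in>Ln. \<Delta>' \<inter> \<Delta> \<noteq> {}}
            in (new, U \<union> new)))"

definition layer :: "'a set set \<Rightarrow> 'a \<Rightarrow> nat \<Rightarrow> 'a set set" where
  "layer T x n = fst (layer_pair T x n)"

definition L_layer :: "real \<Rightarrow> nat \<Rightarrow> (nat \<Rightarrow> pt) \<Rightarrow> pt set \<Rightarrow> int \<Rightarrow> nat \<Rightarrow> pt \<Rightarrow> pt set set" where
  "L_layer L N \<nu> K M n x = layer (complexes L N \<nu> K M) x n"

end

theory Submission
  imports Defs
begin

text \<open>Write an \<open>M\<close>-complex as \<open>L^M (K + a + L^m g)\<close>, where \<open>a\<close> ranges over the \<open>N^m\<close>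
  offsets of the level-\<open>m\<close> subcells of \<open>K\<close> and \<open>K + g\<close> is a \<open>0\<close>-complex. By the open set
  condition the translates \<open>U + g\<close> over all such \<open>g\<close> are pairwise disjoint, so a volume
  comparison bounds the number of such \<open>g\<close> in any ball of fixed radius by a constant \<open>B\<close>.
  Members of the \<open>n\<close>-th layer around \<open>x\<close> have diameter at most \<open>L^M diam K\<close> and hence lie
  in the ball of radius \<open>n L^M diam K\<close> about \<open>x\<close>; choosing \<open>L^(m-1) < n \<le> L^m\<close> and rescaling
  by \<open>L^-(M+m)\<close>, their offsets \<open>g\<close> lie in a ball of radius \<open>diam K + max norm on K\<close>. So the
  layer has at most \<open>N^m B \<le> N B n^(log N / log L)\<close> members.\<close>

definition cell_offset :: "real \<Rightarrow> (nat \<Rightarrow> pt) \<Rightarrow> (nat \<Rightarrow> nat) \<Rightarrow> nat \<Rightarrow> pt" where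
  "cell_offset L \<nu> b n = (\<Sum>k=1..n. (L ^ k) *\<^sub>R \<nu> (b k))"

text \<open>If \<open>\<nu> 1 = 0\<close>, the \<open>0\<close>-complexes are exactly the sets \<open>K + g\<close> with \<open>g\<close> in \<open>complex_offsets\<close>.\<close>
definition complex_offsets :: "real \<Rightarrow> nat \<Rightarrow> (nat \<Rightarrow> pt) \<Rightarrow> pt set" where
  "complex_offsets L N \<nu> = {cell_offset L \<nu> b n | b n. \<forall>k\<in>{1..n}. b k \<in> {1..N}}"

lemma cell_offset_0 [simp]: "cell_offset L \<nu> b 0 = 0"
  by (simp add: cell_offset_def)

lemma cell_offset_Suc [simp]:
  "cell_offset L \<nu> b (Suc n) = cell_offset L \<nu> b n + (L ^ Suc n) *\<^sub>R \<nu> (b (Suc n))"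
  by (simp add: cell_offset_def)

lemma cell_offset_cong:
  "(\<And>k. k \<in> {1..n} \<Longrightarrow> b k = b' k) \<Longrightarrow> cell_offset L \<nu> b n = cell_offset L \<nu> b' n"
  unfolding cell_offset_def by (rule sum.cong) auto

lemma cell_offset_pad:
  assumes "\<nu> 1 = 0" and "n \<le> q"
  shows "cell_offset L \<nu> (\<lambda>k. if k \<le> n then b k else 1) q = cell_offset L \<nu> b n"
  using assms(2)
proof (induction q rule: dec_induct)
  case base
  then show ?case by (rule cell_offset_cong) simp
next
  case (step q)
  then show ?case using assms(1) by simp
qed

lemma cell_offset_add:
  "cell_offset L \<nu> b (m + r) = cell_offset L \<nu> b m + (L ^ m) *\<^sub>R cell_offset L \<nu> (\<lambda>k. b (k + m)) r"
  by (induction r) (simp_all add: power_add algebra_simps)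

lemma sum_powr_eq_cell_offset:
  assumes "L > 0"
  shows "(\<Sum>j\<in>{M+1..M + int n}. (L powr of_int j) *\<^sub>R \<nu> (i j))
       = (L powr of_int M) *\<^sub>R cell_offset L \<nu> (\<lambda>k. i (M + int k)) n"
proof -
  have "(\<Sum>j\<in>{M+1..M + int n}. (L powr of_int j) *\<^sub>R \<nu> (i j))
      = (\<Sum>k=1..n. (L powr of_int (M + int k)) *\<^sub>R \<nu> (i (M + int k)))"
    by (rule sum.reindex_bij_witness[of _ "\<lambda>j. M + int j" "\<lambda>j. nat (j - M)"]) auto
  also have "\<dots> = (L powr of_int M) *\<^sub>R cell_offset L \<nu> (\<lambda>k. i (M + int k)) n"
    using assms by (simp add: cell_offset_def scaleR_sum_right powr_add powr_realpow)
  finally show ?thesis .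
qed

lemma scaled_cell_offset_Suc:
  assumes "L \<noteq> 0"
  shows "(1 / L ^ Suc n) *\<^sub>R (y + cell_offset L \<nu> b (Suc n))
       = Psi L \<nu> (b (Suc n)) ((1 / L ^ n) *\<^sub>R (y + cell_offset L \<nu> b n))"
  using assms by (simp add: Psi_def scaleR_add_right)

lemma scaled_cell_offset_mem:
  assumes "L \<noteq> 0" and invariant: "\<And>i. i \<in> {1..N} \<Longrightarrow> Psi L \<nu> i ` S \<subseteq> S"
    and "\<forall>k\<in>{1..n}. b k \<in> {1..N}" and "y \<in> S"
  shows "(1 / L ^ n) *\<^sub>R (y + cell_offset L \<nu> b n) \<in> S"
  using assms(3)
proof (induction n)
  case 0
  then show ?case using \<open>y \<in> S\<close> by simp
next
  case (Suc n)
  then have "b (Suc n) \<in> {1..N}" "(1 / L ^ n) *\<^sub>R (y + cell_offset L \<nu> b n) \<in> S" by auto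
  then show ?case
    using invariant scaled_cell_offset_Suc[OF \<open>L \<noteq> 0\<close>] by (metis image_subset_iff)
qed

lemma card_mult_measure_le_if_disjoint_translates:
  fixes U :: "'a::euclidean_space set"
  assumes U: "U \<in> lmeasurable" "U \<subseteq> cball 0 r"
    and disjoint: "disjoint_family_on (\<lambda>g. (+) g ` U) F"
    and F: "finite F" "F \<subseteq> cball c R"
  shows "real (card F) * measure lebesgue U \<le> measure lebesgue (cball c (R + r))"
proof -
  have translate: "(+) g ` U \<in> lmeasurable" for g
    using U(1) by (rule measurable_translation)
  have "real (card F) * measure lebesgue U = (\<Sum>g\<in>F. measure lebesgue ((+) g ` U))"
    by (simp add: measure_translation)
  also have "\<dots> = measure lebesgue (\<Union>g\<in>F. (+) g ` U)"
    using F(1) disjoint fmeasurableD[OF translate] fmeasurableD2[OF translate]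
    by (intro measure_finite_Union[symmetric]) auto
  also have "\<dots> \<le> measure lebesgue (cball c (R + r))"
  proof (rule measure_mono_fmeasurable)
    show "(\<Union>g\<in>F. (+) g ` U) \<subseteq> cball c (R + r)"
    proof clarify
      fix g y assume "g \<in> F" "y \<in> U"
      then have "dist c g \<le> R" "norm y \<le> r" using F(2) U(2) by auto
      then show "g + y \<in> cball c (R + r)"
        using dist_triangle[of c "g + y" g] by (simp add: dist_norm)
    qed
    show "(\<Union>g\<in>F. (+) g ` U) \<in> sets lebesgue"
      using F(1) translate by (intro sets.finite_UN) auto
  qed simp
  finally show ?thesis .
qed

lemma card_inter_cball_bounded_if_disjoint_translates:
  fixes U :: "'a::euclidean_space set"
  assumes "open U" "bounded U" "U \<noteq> {}" and disjoint: "disjoint_family_on (\<lambda>g. (+) g ` U) G"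
  shows "\<exists>B. \<forall>c. finite (G \<inter> cball c R) \<and> card (G \<inter> cball c R) \<le> B"
proof -
  obtain r where r: "U \<subseteq> cball 0 r"
    using bounded_subset_ballD[OF \<open>bounded U\<close>, of 0] by (meson ball_subset_cball order_trans)
  have U: "U \<in> lmeasurable"
    using assms(1,2) by (simp add: lmeasurable_open)
  have "0 < measure lebesgue U"
    using open_not_negligible[OF assms(1,3)] negligible_iff_measure0[OF U] measure_nonneg[of lebesgue U]
    by linarith
  define B where "B = nat \<lfloor>measure lebesgue (cball (0::'a) (R + r)) / measure lebesgue U\<rfloor>"
  have "finite (G \<inter> cball c R) \<and> card (G \<inter> cball c R) \<le> B" for c
  proof (rule finite_if_finite_subsets_card_bdd)
    fix F assume "F \<subseteq> G \<inter> cball c R" "finite F"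
    then have "real (card F) * measure lebesgue U \<le> measure lebesgue (cball c (R + r))"
      using card_mult_measure_le_if_disjoint_translates[OF U r disjoint_family_on_mono[OF _ disjoint]]
      by auto
    also have "\<dots> = measure lebesgue (cball (0::'a) (R + r))"
      using measure_translation[of c "cball 0 (R + r)"] cball_translation[of c 0 "R + r"] by simp
    finally show "card F \<le> B"
      unfolding B_def using \<open>0 < measure lebesgue U\<close> by (intro le_nat_floor) (simp add: field_simps)
  qed
  then show ?thesis by blast
qed

lemma layer_subset_cball:
  fixes T :: "'a::metric_space set set"
  assumes diam: "\<And>P a b. P \<in> T \<Longrightarrow> a \<in> P \<Longrightarrow> b \<in> P \<Longrightarrow> dist a b \<le> d" and "n \<ge> 1"
  shows "layer T x n \<subseteq> {P \<in> T. P \<subseteq> cball x (real n * d)}"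
  using \<open>n \<ge> 1\<close>
proof (induction n rule: dec_induct)
  case base
  show ?case using diam by (auto simp: layer_def)
next
  case (step n)
  show ?case
  proof
    fix P assume "P \<in> layer T x (Suc n)"
    then obtain Q z where "P \<in> T" "Q \<in> layer T x n" "z \<in> Q" "z \<in> P"
      using \<open>1 \<le> n\<close> by (auto simp: layer_def Let_def)
    have "Q \<subseteq> cball x (real n * d)"
      using step.IH \<open>Q \<in> layer T x n\<close> by blast
    then have "dist x z \<le> real n * d"
      using \<open>z \<in> Q\<close> by auto
    moreover have "dist z a \<le> d" if "a \<in> P" for a
      using diam \<open>P \<in> T\<close> \<open>z \<in> P\<close> that by blast
    ultimately have "P \<subseteq> cball x (real (Suc n) * d)"
      using dist_triangle[of x _ z] by (fastforce simp: algebra_simps intro: order_trans)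
    with \<open>P \<in> T\<close> show "P \<in> {P \<in> T. P \<subseteq> cball x (real (Suc n) * d)}"
      by simp
  qed
qed

lemma complexes_dist_le:
  assumes "bounded K" "P \<in> complexes L N \<nu> K M" "a \<in> P" "b \<in> P"
  shows "dist a b \<le> L powr of_int M * diameter K"
proof -
  obtain t where "P = (\<lambda>y. (L powr of_int M) *\<^sub>R y + t) ` K"
    using assms(2) unfolding complexes_def by blast
  then obtain y y' where "y \<in> K" "y' \<in> K"
    and "a = (L powr of_int M) *\<^sub>R y + t" "b = (L powr of_int M) *\<^sub>R y' + t"
    using assms(3,4) by auto
  then have "dist a b = L powr of_int M * dist y y'"
    by (simp add: dist_norm flip: scaleR_diff_right)
  also have "\<dots> \<le> L powr of_int M * diameter K"
    using diameter_bounded_bound[OF assms(1) \<open>y \<in> K\<close> \<open>y' \<in> K\<close>] by (simp add: mult_left_mono)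
  finally show ?thesis .
qed

text \<open>The address is padded with the digit \<open>1\<close>, which contributes nothing since \<open>\<nu> 1 = 0\<close>,
  and then split after its first \<open>m\<close> digits.\<close>
lemma complexes_obtain_offsets:
  assumes "L > 0" "\<nu> 1 = 0" "N \<ge> 1" and "P \<in> complexes L N \<nu> K M"
  obtains w g where "w \<in> {1..m} \<rightarrow>\<^sub>E {1..N}" "g \<in> complex_offsets L N \<nu>"
    and "P = (\<lambda>y. (L powr of_int M) *\<^sub>R (y + cell_offset L \<nu> w m + (L ^ m) *\<^sub>R g)) ` K"
proof -
  obtain J i where J: "J \<ge> M + 1" and digits: "\<forall>j\<in>{M+1..J}. i j \<in> {1..N}"
    and P: "P = (\<lambda>y. (L powr of_int M) *\<^sub>R y + (\<Sum>j\<in>{M+1..J}. (L powr of_int j) *\<^sub>R \<nu> (i j))) ` K"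
    using assms(4) unfolding complexes_def by blast
  define n where "n = nat (J - M)"
  define q where "q = max n m"
  define c where "c = (\<lambda>k. if k \<le> n then i (M + int k) else 1)"
  have J_eq: "J = M + int n"
    using J unfolding n_def by simp
  have c_digits: "c k \<in> {1..N}" if "k \<ge> 1" for k
    using digits \<open>N \<ge> 1\<close> that unfolding c_def J_eq by auto
  have "(\<Sum>j\<in>{M+1..J}. (L powr of_int j) *\<^sub>R \<nu> (i j)) = (L powr of_int M) *\<^sub>R cell_offset L \<nu> c q"
    unfolding J_eq sum_powr_eq_cell_offset[OF \<open>L > 0\<close>] c_def
    by (simp add: cell_offset_pad[where \<nu> = \<nu>, OF \<open>\<nu> 1 = 0\<close>] q_def)
  also have "cell_offset L \<nu> c q
      = cell_offset L \<nu> c m + (L ^ m) *\<^sub>R cell_offset L \<nu> (\<lambda>k. c (k + m)) (q - m)"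
    using cell_offset_add[of L \<nu> c m "q - m"] by (simp add: q_def)
  also have "cell_offset L \<nu> c m = cell_offset L \<nu> (restrict c {1..m}) m"
    by (rule cell_offset_cong) simp
  finally have "P = (\<lambda>y. (L powr of_int M) *\<^sub>R (y + cell_offset L \<nu> (restrict c {1..m}) m
      + (L ^ m) *\<^sub>R cell_offset L \<nu> (\<lambda>k. c (k + m)) (q - m))) ` K"
    unfolding P by (simp add: scaleR_add_right add.assoc)
  moreover have "restrict c {1..m} \<in> {1..m} \<rightarrow>\<^sub>E {1..N}"
    using c_digits by auto
  moreover have "cell_offset L \<nu> (\<lambda>k. c (k + m)) (q - m) \<in> complex_offsets L N \<nu>"
    unfolding complex_offsets_def using c_digits by fastforce
  ultimately show ?thesis using that by blast
qed

lemma exists_exponent_powr_bound: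
  assumes "L > 1" "N \<ge> 1" "n \<ge> 1"
  obtains m :: nat where "real n \<le> L ^ m" "real N ^ m \<le> real N * real n powr (ln (real N) / ln L)"
proof
  define m where "m = nat \<lceil>ln (real n) / ln L\<rceil>"
  have "ln L > 0" "ln (real n) / ln L \<ge> 0"
    using assms by simp_all
  then have m_bounds: "ln (real n) / ln L \<le> real m" "real m \<le> ln (real n) / ln L + 1"
    unfolding m_def by linarith+
  have "real n = L powr (ln (real n) / ln L)"
    using assms \<open>ln L > 0\<close> by (simp add: powr_def)
  also have "\<dots> \<le> L ^ m"
    using m_bounds(1) assms(1) by (simp add: powr_realpow[symmetric])
  finally show "real n \<le> L ^ m" .
  have "real N ^ m = real N powr real m"
    using assms(2) by (simp add: powr_realpow)
  also have "\<dots> \<le> real N powr (ln (real n) / ln L + 1)"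
    using m_bounds(2) assms(2) by (intro powr_mono) auto
  also have "\<dots> = real N * real N powr (ln (real n) / ln L)"
    using assms(2) by (simp add: powr_add)
  also have "real N powr (ln (real n) / ln L) = real n powr (ln (real N) / ln L)"
    using assms(2,3) by (simp add: powr_def)
  finally show "real N ^ m \<le> real N * real n powr (ln (real N) / ln L)" .
qed

locale open_set_condition_ifs =
  fixes L :: real and N :: nat and \<nu> :: "nat \<Rightarrow> pt" and K U :: "pt set"
  assumes L_gt_1: "L > 1" and N_pos: "N \<ge> 1" and nu_1: "\<nu> 1 = 0"
    and compact_K: "compact K" and K_nonempty: "K \<noteq> {}"
    and Psi_K: "\<And>i. i \<in> {1..N} \<Longrightarrow> Psi L \<nu> i ` K \<subseteq> K"
    and open_U: "open U" and bounded_U: "bounded U" and U_nonempty: "U \<noteq> {}"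
    and Psi_U: "\<And>i. i \<in> {1..N} \<Longrightarrow> Psi L \<nu> i ` U \<subseteq> U"
    and Psi_U_disjoint:
      "\<And>i j. i \<in> {1..N} \<Longrightarrow> j \<in> {1..N} \<Longrightarrow> i \<noteq> j \<Longrightarrow> Psi L \<nu> i ` U \<inter> Psi L \<nu> j ` U = {}"
begin

lemma L_nonzero: "L \<noteq> 0"
  using L_gt_1 by simp

lemma bounded_K: "bounded K"
  using compact_K by (rule compact_imp_bounded)

text \<open>Rescaled by \<open>L^-n\<close>, both sides are images of points of \<open>U\<close> under \<open>Psi\<close> of the last
  digits, so the open set condition forces these digits to agree.\<close>
lemma cell_offset_eq_if_translates_meet:
  assumes "y \<in> U" "y' \<in> U"
  shows "\<forall>k\<in>{1..n}. b k \<in> {1..N} \<Longrightarrow> \<forall>k\<in>{1..n}. b' k \<in> {1..N} \<Longrightarrow>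
    y + cell_offset L \<nu> b n = y' + cell_offset L \<nu> b' n \<Longrightarrow> cell_offset L \<nu> b n = cell_offset L \<nu> b' n"
proof (induction n)
  case 0
  then show ?case by simp
next
  case (Suc n)
  define V where "V = (1 / L ^ n) *\<^sub>R (y + cell_offset L \<nu> b n)"
  define V' where "V' = (1 / L ^ n) *\<^sub>R (y' + cell_offset L \<nu> b' n)"
  have digits: "\<forall>k\<in>{1..n}. b k \<in> {1..N}" "\<forall>k\<in>{1..n}. b' k \<in> {1..N}"
    "b (Suc n) \<in> {1..N}" "b' (Suc n) \<in> {1..N}"
    using Suc.prems by auto
  have "V \<in> U" "V' \<in> U"
    unfolding V_def V'_def using scaled_cell_offset_mem[OF L_nonzero Psi_U] digits assms by auto
  moreover have Psi_eq: "Psi L \<nu> (b (Suc n)) V = Psi L \<nu> (b' (Suc n)) V'"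
    using Suc.prems(3) unfolding V_def V'_def by (metis scaled_cell_offset_Suc[OF L_nonzero])
  ultimately have last_eq: "b (Suc n) = b' (Suc n)"
    using Psi_U_disjoint[OF digits(3,4)] by blast
  with Psi_eq have "V = V'"
    using L_nonzero by (simp add: Psi_def)
  then have "y + cell_offset L \<nu> b n = y' + cell_offset L \<nu> b' n"
    unfolding V_def V'_def using L_nonzero by simp
  with Suc.IH digits last_eq show ?case by simp
qed

lemma complex_offsets_translates_disjoint:
  "disjoint_family_on (\<lambda>g. (+) g ` U) (complex_offsets L N \<nu>)"
unfolding disjoint_family_on_def
proof (intro ballI impI)
  fix g g' assume "g \<in> complex_offsets L N \<nu>" "g' \<in> complex_offsets L N \<nu>" "g \<noteq> g'"
  then obtain b n b' n' where digits: "\<forall>k\<in>{1..n}. b k \<in> {1..N}" "\<forall>k\<in>{1..n'}. b' k \<in> {1..N}"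
    and g: "g = cell_offset L \<nu> b n" "g' = cell_offset L \<nu> b' n'" and "g \<noteq> g'"
    unfolding complex_offsets_def by blast
  define q where "q = max n n'"
  define c where "c = (\<lambda>k. if k \<le> n then b k else 1)"
  define c' where "c' = (\<lambda>k. if k \<le> n' then b' k else 1)"
  have "cell_offset L \<nu> c q = g" "cell_offset L \<nu> c' q = g'"
    unfolding g c_def c'_def by (rule cell_offset_pad[where \<nu> = \<nu>, OF nu_1], simp add: q_def)+
  moreover have "\<forall>k\<in>{1..q}. c k \<in> {1..N}" "\<forall>k\<in>{1..q}. c' k \<in> {1..N}"
    using digits N_pos unfolding c_def c'_def by auto
  ultimately have "g = g'" if "y \<in> U" "y' \<in> U" "g + y = g' + y'" for y y'
    using cell_offset_eq_if_translates_meet[OF that(1,2), of q c c'] that(3) by (simp add: add.commute)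
  with \<open>g \<noteq> g'\<close> show "(+) g ` U \<inter> (+) g' ` U = {}"
    by blast
qed

lemma offset_near_scaled_center:
  assumes "s > 0" "\<forall>k\<in>{1..m}. w k \<in> {1..N}"
    and inside: "(\<lambda>y. s *\<^sub>R (y + cell_offset L \<nu> w m + (L ^ m) *\<^sub>R g)) ` K \<subseteq> cball x (L ^ m * (s * D))"
  shows "\<exists>z\<in>K. dist ((1 / (s * L ^ m)) *\<^sub>R x) (z + g) \<le> D"
proof -
  obtain y where "y \<in> K"
    using K_nonempty by blast
  define z where "z = (1 / L ^ m) *\<^sub>R (y + cell_offset L \<nu> w m)"
  have "z \<in> K"
    unfolding z_def using scaled_cell_offset_mem[OF L_nonzero Psi_K assms(2) \<open>y \<in> K\<close>] .
  have scale_pos: "s * L ^ m > 0"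
    using \<open>s > 0\<close> L_gt_1 by simp
  have "(L ^ m) *\<^sub>R z = y + cell_offset L \<nu> w m"
    unfolding z_def using L_nonzero by simp
  then have "s *\<^sub>R (y + cell_offset L \<nu> w m + (L ^ m) *\<^sub>R g) = (s * L ^ m) *\<^sub>R (z + g)"
    by (simp add: scaleR_add_right flip: scaleR_scaleR)
  then have "dist x ((s * L ^ m) *\<^sub>R (z + g)) \<le> (s * L ^ m) * D"
    using inside \<open>y \<in> K\<close> by (force simp: mult_ac)
  moreover have "(1 / (s * L ^ m)) *\<^sub>R x - (z + g) = (1 / (s * L ^ m)) *\<^sub>R (x - (s * L ^ m) *\<^sub>R (z + g))"
    using \<open>s > 0\<close> L_nonzero by (simp add: scaleR_diff_right)
  ultimately have "dist ((1 / (s * L ^ m)) *\<^sub>R x) (z + g) \<le> D"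
    using scale_pos by (simp add: dist_norm divide_le_eq mult.commute)
  with \<open>z \<in> K\<close> show ?thesis by blast
qed

lemma complexes_in_cball_subset_image:
  fixes M :: int
  assumes R: "\<forall>z\<in>K. norm z \<le> R"
  defines "s \<equiv> L powr of_int M"
  shows "{P \<in> complexes L N \<nu> K M. P \<subseteq> cball x (L ^ m * (s * D))}
    \<subseteq> (\<lambda>(w, g). (\<lambda>y. s *\<^sub>R (y + cell_offset L \<nu> w m + (L ^ m) *\<^sub>R g)) ` K)
        ` (({1..m} \<rightarrow>\<^sub>E {1..N}) \<times> (complex_offsets L N \<nu> \<inter> cball ((1 / (s * L ^ m)) *\<^sub>R x) (D + R)))"
proof clarify
  fix P assume P: "P \<in> complexes L N \<nu> K M" "P \<subseteq> cball x (L ^ m * (s * D))"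
  have "s > 0"
    unfolding s_def using L_gt_1 by simp
  obtain w g where w: "w \<in> {1..m} \<rightarrow>\<^sub>E {1..N}" and g: "g \<in> complex_offsets L N \<nu>"
    and P_eq: "P = (\<lambda>y. s *\<^sub>R (y + cell_offset L \<nu> w m + (L ^ m) *\<^sub>R g)) ` K"
    using complexes_obtain_offsets[of L \<nu> N P K M m] P(1) L_gt_1 nu_1 N_pos
    unfolding s_def by auto
  have "\<forall>k\<in>{1..m}. w k \<in> {1..N}"
    using w by blast
  then obtain z where "z \<in> K" and near: "dist ((1 / (s * L ^ m)) *\<^sub>R x) (z + g) \<le> D"
    using offset_near_scaled_center[OF \<open>s > 0\<close> _ P(2)[unfolded P_eq]] by blast
  have "dist (z + g) g \<le> R"
    using R \<open>z \<in> K\<close> by (simp add: dist_norm)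
  then have "dist ((1 / (s * L ^ m)) *\<^sub>R x) g \<le> D + R"
    using dist_triangle[of "(1 / (s * L ^ m)) *\<^sub>R x" g "z + g"] near by linarith
  with w g have "(w, g) \<in> ({1..m} \<rightarrow>\<^sub>E {1..N}) \<times> (complex_offsets L N \<nu> \<inter> cball ((1 / (s * L ^ m)) *\<^sub>R x) (D + R))"
    by simp
  then show "P \<in> (\<lambda>(w, g). (\<lambda>y. s *\<^sub>R (y + cell_offset L \<nu> w m + (L ^ m) *\<^sub>R g)) ` K)
      ` (({1..m} \<rightarrow>\<^sub>E {1..N}) \<times> (complex_offsets L N \<nu> \<inter> cball ((1 / (s * L ^ m)) *\<^sub>R x) (D + R)))"
    unfolding P_eq by (rule rev_image_eqI) simp
qed

lemma card_complexes_in_cball_le: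
  "\<exists>B. \<forall>M m x. finite {P \<in> complexes L N \<nu> K M. P \<subseteq> cball x (L ^ m * (L powr of_int M * D))}
      \<and> card {P \<in> complexes L N \<nu> K M. P \<subseteq> cball x (L ^ m * (L powr of_int M * D))} \<le> N ^ m * B"
proof -
  obtain R where R: "\<forall>z\<in>K. norm z \<le> R"
    using bounded_K bounded_iff by blast
  obtain B where B: "\<forall>c. finite (complex_offsets L N \<nu> \<inter> cball c (D + R))
      \<and> card (complex_offsets L N \<nu> \<inter> cball c (D + R)) \<le> B"
    using card_inter_cball_bounded_if_disjoint_translates[OF open_U bounded_U U_nonempty
        complex_offsets_translates_disjoint] by blast
  have count: "finite A \<and> card A \<le> N ^ m * B"
    if "A \<subseteq> F ` (({1..m} \<rightarrow>\<^sub>E {1..N}) \<times> (complex_offsets L N \<nu> \<inter> cball c (D + R)))"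
    for A :: "pt set set" and F :: "_ \<Rightarrow> pt set" and m c
  proof -
    define W where "W = {1..m} \<rightarrow>\<^sub>E {1..N}"
    define G where "G = complex_offsets L N \<nu> \<inter> cball c (D + R)"
    have "finite W" "finite G" "card W = N ^ m" "card G \<le> B"
      using B unfolding W_def G_def by (simp_all add: finite_PiE card_PiE)
    have "card A \<le> card (F ` (W \<times> G))"
      using that \<open>finite W\<close> \<open>finite G\<close> unfolding W_def G_def by (intro card_mono) auto
    also have "\<dots> \<le> card W * card G"
      by (metis card_cartesian_product card_image_le \<open>finite W\<close> \<open>finite G\<close> finite_SigmaI)
    also have "\<dots> \<le> N ^ m * B"
      using \<open>card W = N ^ m\<close> \<open>card G \<le> B\<close> by simp
    finally show ?thesis
      using that \<open>finite W\<close> \<open>finite G\<close> unfolding W_def G_def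
      by (meson finite_SigmaI finite_imageI finite_subset)
  qed
  show ?thesis
  proof (intro exI allI)
    fix M m x
    show "finite {P \<in> complexes L N \<nu> K M. P \<subseteq> cball x (L ^ m * (L powr of_int M * D))}
      \<and> card {P \<in> complexes L N \<nu> K M. P \<subseteq> cball x (L ^ m * (L powr of_int M * D))} \<le> N ^ m * B"
      by (rule count[OF complexes_in_cball_subset_image[OF R, where M = M and m = m and x = x]])
  qed
qed

lemma card_layer_le_powr:
  "\<exists>C. \<forall>M x n. n \<ge> 1 \<longrightarrow> finite (L_layer L N \<nu> K M n x)
      \<and> real (card (L_layer L N \<nu> K M n x)) \<le> C * real n powr (ln (real N) / ln L)"
proof -
  define D where "D = diameter K"
  obtain B where B: "\<forall>M m x. finite {P \<in> complexes L N \<nu> K M. P \<subseteq> cball x (L ^ m * (L powr of_int M * D))}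
      \<and> card {P \<in> complexes L N \<nu> K M. P \<subseteq> cball x (L ^ m * (L powr of_int M * D))} \<le> N ^ m * B"
    using card_complexes_in_cball_le by blast
  have "finite (L_layer L N \<nu> K M n x)
      \<and> real (card (L_layer L N \<nu> K M n x)) \<le> (N * B) * real n powr (ln (real N) / ln L)"
    if "n \<ge> 1" for M n x
  proof -
    obtain m where m: "real n \<le> L ^ m" "real N ^ m \<le> real N * real n powr (ln (real N) / ln L)"
      using exists_exponent_powr_bound[OF L_gt_1 N_pos \<open>n \<ge> 1\<close>] by blast
    have "L_layer L N \<nu> K M n x \<subseteq> {P \<in> complexes L N \<nu> K M. P \<subseteq> cball x (real n * (L powr of_int M * D))}"
      unfolding L_layer_def D_def using complexes_dist_le[OF bounded_K] \<open>n \<ge> 1\<close> by (rule layer_subset_cball)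
    moreover have "cball x (real n * (L powr of_int M * D)) \<subseteq> cball x (L ^ m * (L powr of_int M * D))"
      using m(1) diameter_ge_0[OF bounded_K] unfolding D_def by (intro subset_cball mult_right_mono) simp_all
    ultimately have layer_subset:
      "L_layer L N \<nu> K M n x \<subseteq> {P \<in> complexes L N \<nu> K M. P \<subseteq> cball x (L ^ m * (L powr of_int M * D))}"
      by blast
    then have "card (L_layer L N \<nu> K M n x) \<le> N ^ m * B"
      using B card_mono le_trans by meson
    then have "real (card (L_layer L N \<nu> K M n x)) \<le> real N ^ m * B"
      by (metis of_nat_le_iff of_nat_mult of_nat_power)
    also have "\<dots> \<le> (N * B) * real n powr (ln (real N) / ln L)"
      using mult_right_mono[OF m(2), of B] by (simp add: mult_ac)
    finally show ?thesis
      using B layer_subset finite_subset by meson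
  qed
  then show ?thesis by blast
qed

end

lemma simple_nested_fractal_obtain_open_set:
  assumes "simple_nested_fractal L N \<nu> K" "\<nu> 1 = 0"
  obtains U where "open_set_condition_ifs L N \<nu> K U"
proof -
  have "L > 1" "N \<ge> 2" "compact K" "K \<noteq> {}" and K_eq: "K = (\<Union>i\<in>{1..N}. Psi L \<nu> i ` K)"
    using assms(1) by (simp_all add: simple_nested_fractal_def)
  then have "Psi L \<nu> i ` K \<subseteq> K" if "i \<in> {1..N}" for i
    using that by blast
  moreover obtain U where "open U" "bounded U" "U \<noteq> {}" "\<forall>i\<in>{1..N}. Psi L \<nu> i ` U \<subseteq> U"
    "\<forall>i\<in>{1..N}. \<forall>j\<in>{1..N}. i \<noteq> j \<longrightarrow> Psi L \<nu> i ` U \<inter> Psi L \<nu> j ` U = {}"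
    using assms(1) unfolding simple_nested_fractal_def by (elim conjE exE) blast
  ultimately have "open_set_condition_ifs L N \<nu> K U"
    using \<open>L > 1\<close> \<open>N \<ge> 2\<close> \<open>compact K\<close> \<open>K \<noteq> {}\<close> \<open>\<nu> 1 = 0\<close> by unfold_locales auto
  then show ?thesis using that by blast
qed

theorem lemmaA4:
  fixes L :: real and N :: nat and \<nu> :: "nat \<Rightarrow> real ^ 2" and K :: "(real ^ 2) set"
  assumes "L > 1" and "N \<ge> 2" and "\<nu> 1 = 0"
    and "simple_nested_fractal L N \<nu> K"
    and "card (essential_fixed_points L N \<nu>) \<ge> 3"
  shows "\<exists>C8::real. \<forall>M::int. \<forall>x\<in>K_inf L K. \<forall>n::nat. n \<ge> 1 \<longrightarrow>
           finite (L_layer L N \<nu> K M n x) \<and>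
           real (card (L_layer L N \<nu> K M n x)) \<le> C8 * real n powr (ln (real N) / ln L)"
proof -
  obtain U where "open_set_condition_ifs L N \<nu> K U"
    using simple_nested_fractal_obtain_open_set assms(3,4) by blast
  then obtain C where "\<forall>M x n. n \<ge> 1 \<longrightarrow> finite (L_layer L N \<nu> K M n x)
      \<and> real (card (L_layer L N \<nu> K M n x)) \<le> C * real n powr (ln (real N) / ln L)"
    using open_set_condition_ifs.card_layer_le_powr by blast
  then show ?thesis
    by blast
qed

end
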